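(* Let $r,n,\delta\ge 2$ be natural numbers, let $m := \max\{\binom{rn-1}{r-1}n^2, \delta\}$ and $N := \binom{m-1}{n-1}$. Let $G$ be the graph with vertices $v_{i,j,k}$ for $i\in[n]$, $j\in[N]$, $k\in[m]$, and vertices $s_{i,X}$ for $i\in[n]$ and $X\subseteq[m]$ with $|X|=n$, whose edges are: $v_{i,j,k}v_{i',j',k'}$ whenever $i\neq i'$ and $k=k'$; and $s_{i,X}v_{i,j,k}$ whenever $k\in X$ (for all $j\in[N]$). Then $\chi(G)=n$.
   Context: $[t]=\{1,\dots,t\}$. There are no other edges in $G$ than those listed. $\chi$ denotes the chromatic number. *)

theory Defs
  imports Main
begin

(* Simple graphs given by a finite vertex set V and a symmetric edge relation E. *)

definition proper_colouring :: "'a set \<Rightarrow> ('a \<Rightarrow> 'a \<Rightarrow> bool) \<Rightarrow> nat \<Rightarrow> ('a \<Rightarrow> nat) \<Rightarrow> bool" where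
  "proper_colouring V E c f \<longleftrightarrow>
     (\<forall>x\<in>V. f x < c) \<and> (\<forall>x\<in>V. \<forall>y\<in>V. E x y \<longrightarrow> f x \<noteq> f y)"

definition chromatic_number :: "'a set \<Rightarrow> ('a \<Rightarrow> 'a \<Rightarrow> bool) \<Rightarrow> nat" where
  "chromatic_number V E = (LEAST c. \<exists>f. proper_colouring V E c f)"

datatype vtx = Vv nat nat nat | Sv nat "nat set"

definition par_m :: "nat \<Rightarrow> nat \<Rightarrow> nat \<Rightarrow> nat" where
  "par_m r n \<delta> = max (((r * n - 1) choose (r - 1)) * n ^ 2) \<delta>"

definition par_N :: "nat \<Rightarrow> nat \<Rightarrow> nat \<Rightarrow> nat" where
  "par_N r n \<delta> = (par_m r n \<delta> - 1) choose (n - 1)"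

definition G_verts :: "nat \<Rightarrow> nat \<Rightarrow> nat \<Rightarrow> vtx set" where
  "G_verts n N m =
     {Vv i j k | i j k. i \<in> {1..n} \<and> j \<in> {1..N} \<and> k \<in> {1..m}}
     \<union> {Sv i X | i X. i \<in> {1..n} \<and> X \<subseteq> {1..m} \<and> card X = n}"

definition G_edge0 :: "nat \<Rightarrow> nat \<Rightarrow> nat \<Rightarrow> vtx \<Rightarrow> vtx \<Rightarrow> bool" where
  "G_edge0 n N m x y \<longleftrightarrow>
     (\<exists>i j k i' j' k'. x = Vv i j k \<and> y = Vv i' j' k' \<and> i \<noteq> i' \<and> k = k') \<or>
     (\<exists>i X j k. x = Sv i X \<and> y = Vv i j k \<and> k \<in> X)"

definition G_edge :: "nat \<Rightarrow> nat \<Rightarrow> nat \<Rightarrow> vtx \<Rightarrow> vtx \<Rightarrow> bool" where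
  "G_edge n N m x y \<longleftrightarrow> x \<in> G_verts n N m \<and> y \<in> G_verts n N m \<and>
     (G_edge0 n N m x y \<or> G_edge0 n N m y x)"

end

theory Submission
  imports Defs
begin

text \<open>The vertices \<open>v\<^sub>i\<^sub>,\<^sub>1\<^sub>,\<^sub>1\<close>, \<open>i \<in> [n]\<close>, form a clique, so at least \<open>n\<close> colours are needed.
  Conversely, colour \<open>v\<^sub>i\<^sub>,\<^sub>j\<^sub>,\<^sub>k\<close> by \<open>i - 1\<close>: two adjacent \<open>v\<close>-vertices differ in \<open>i\<close>.
  Every \<open>s\<^sub>i\<^sub>,\<^sub>X\<close> is adjacent only to \<open>v\<close>-vertices with the same \<open>i\<close>, so it can take the
  colour \<open>i mod n\<close>, the cyclic successor of \<open>i - 1\<close>.\<close>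

lemma chromatic_number_eqI:
  assumes "proper_colouring V E c f"
    and "\<And>c' g. proper_colouring V E c' g \<Longrightarrow> c \<le> c'"
  shows "chromatic_number V E = c"
  unfolding chromatic_number_def
  by (rule Least_equality) (use assms in auto)

lemma card_clique_le_colours:
  assumes "proper_colouring V E c f" "K \<subseteq> V" "finite K"
    and "\<And>x y. x \<in> K \<Longrightarrow> y \<in> K \<Longrightarrow> x \<noteq> y \<Longrightarrow> E x y"
  shows "card K \<le> c"
proof -
  have "inj_on f K"
  proof (rule inj_onI, rule ccontr)
    fix x y assume "x \<in> K" "y \<in> K" "f x = f y" "x \<noteq> y"
    then show False
      using assms unfolding proper_colouring_def by blast
  qed
  moreover have "f ` K \<subseteq> {..<c}"
    using assms unfolding proper_colouring_def by auto
  ultimately have "card K \<le> card {..<c}"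
    by (rule card_inj_on_le) simp
  then show ?thesis
    by simp
qed

lemma n_le_par_m:
  assumes "r \<ge> 1" "n \<ge> 1"
  shows "n \<le> par_m r n \<delta>"
proof -
  have "r - 1 \<le> r * n - 1"
    using assms by (simp add: diff_le_mono)
  then have "(r * n - 1) choose (r - 1) \<ge> 1"
    by (simp add: Suc_le_eq zero_less_binomial)
  then have "n ^ 2 \<le> ((r * n - 1) choose (r - 1)) * n ^ 2"
    by simp
  moreover have "n \<le> n ^ 2"
    by (simp add: power2_eq_square)
  ultimately show ?thesis
    unfolding par_m_def by linarith
qed

lemma par_N_pos:
  assumes "r \<ge> 1" "n \<ge> 1"
  shows "par_N r n \<delta> \<ge> 1"
  using n_le_par_m[OF assms, of \<delta>] assms
  unfolding par_N_def by (simp add: Suc_le_eq zero_less_binomial)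

definition G_colouring :: "nat \<Rightarrow> vtx \<Rightarrow> nat" where
  "G_colouring n x = (case x of Vv i j k \<Rightarrow> i - 1 | Sv i X \<Rightarrow> i mod n)"

lemma proper_colouring_G_colouring:
  assumes "n \<ge> 2"
  shows "proper_colouring (G_verts n N m) (G_edge n N m) n (G_colouring n)"
  unfolding proper_colouring_def
proof (intro conjI ballI impI)
  fix x assume "x \<in> G_verts n N m"
  then show "G_colouring n x < n"
    using assms unfolding G_verts_def G_colouring_def by auto
next
  fix x y
  assume x: "x \<in> G_verts n N m" and y: "y \<in> G_verts n N m" and e: "G_edge n N m x y"
  have mod_ne_pred: "i mod n \<noteq> i - 1" if "i \<in> {1..n}" for i
    using that assms by (cases "i = n") auto
  show "G_colouring n x \<noteq> G_colouring n y"
    using e x y mod_ne_pred unfolding G_edge_def G_edge0_def G_verts_def G_colouring_def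
    by (auto split: vtx.splits) metis+
qed

lemma G_clique:
  assumes "N \<ge> 1" "m \<ge> 1"
  shows "(\<lambda>i. Vv i 1 1) ` {1..n} \<subseteq> G_verts n N m"
    and "card ((\<lambda>i. Vv i 1 1) ` {1..n}) = n"
    and "\<And>x y. x \<in> (\<lambda>i. Vv i 1 1) ` {1..n} \<Longrightarrow> y \<in> (\<lambda>i. Vv i 1 1) ` {1..n} \<Longrightarrow>
           x \<noteq> y \<Longrightarrow> G_edge n N m x y"
proof -
  show clique_verts: "(\<lambda>i. Vv i 1 1) ` {1..n} \<subseteq> G_verts n N m"
    using assms unfolding G_verts_def by auto
  show "card ((\<lambda>i. Vv i 1 1) ` {1..n}) = n"
    by (simp add: card_image inj_on_def)
  fix x y assume "x \<in> (\<lambda>i. Vv i 1 1) ` {1..n}" "y \<in> (\<lambda>i. Vv i 1 1) ` {1..n}" "x \<noteq> y"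
  then show "G_edge n N m x y"
    using clique_verts unfolding G_edge_def G_edge0_def by blast
qed

theorem lemma2p2:
  fixes r n \<delta> :: nat
  assumes "r \<ge> 2" and "n \<ge> 2" and "\<delta> \<ge> 2"
  shows "chromatic_number (G_verts n (par_N r n \<delta>) (par_m r n \<delta>))
           (G_edge n (par_N r n \<delta>) (par_m r n \<delta>)) = n"
proof (rule chromatic_number_eqI)
  let ?N = "par_N r n \<delta>" and ?m = "par_m r n \<delta>"
  show "proper_colouring (G_verts n ?N ?m) (G_edge n ?N ?m) n (G_colouring n)"
    using proper_colouring_G_colouring \<open>n \<ge> 2\<close> .
  fix c g
  assume colouring: "proper_colouring (G_verts n ?N ?m) (G_edge n ?N ?m) c g"
  have "?N \<ge> 1" "?m \<ge> 1"
    using par_N_pos n_le_par_m[of r n \<delta>] assms by auto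
  note clique = G_clique[OF this]
  show "n \<le> c"
    using card_clique_le_colours[OF colouring clique(1) _ clique(3)] clique(2) by simp
qed

end
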